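(* Let $q$ be a nonzero complex number with $q^4\ne1$. Let $\zeta,\kappa,\zeta',\kappa'$ be nonzero complex numbers with $\zeta\neq\pm1$, $\kappa^4\neq 1$, $\zeta'\ne\pm1$, $(\kappa')^4\neq1$. Let $x,y$ and $x',y'$ be the standard bases of $V(\zeta,\kappa)$ and $V(\zeta',\kappa')$. If \[\phi: V(\zeta,\kappa)\otimes V(\zeta',\kappa')\to V(\zeta',\kappa')\otimes V(\zeta,\kappa)\] is a module isomorphism, then there are constants $a_1,a_2,b_1,b_2,c_1,c_2$ with \[\phi(x\otimes x')=a_2\,x'\otimes x,\quad \phi(x\otimes y')=c_2\,x'\otimes y+b_2\,y'\otimes x,\] \[\phi(y\otimes x')=b_1\,x'\otimes y+c_1\,y'\otimes x,\quad \phi(y\otimes y')=a_1\,y'\otimes y. \tag{$*$}\] Furthermore, a linear map $\phi$ of the form $( * )$ is a module homomorphism if and only if \[ \begin{aligned} &[\zeta]c_2+[\zeta']\zeta^{-1}b_2=[\zeta']a_2, && [\zeta]b_1+\zeta^{-1}[\zeta']c_1=[\zeta](\zeta')^{-1}a_2,\\ &[\zeta']\zeta^{-1}a_1=(\zeta')^{-1}[\zeta]c_2-[\zeta']b_1, && -[\zeta]a_1=(\zeta')^{-1}[\zeta]b_2-[\zeta']c_1,\\ &a_2=c_1+\zeta b_2, && \zeta'a_2=b_1+\zeta c_2,\\ &c_2-\zeta'b_2=a_1, && b_1-c_1\zeta'=-a_1\zeta. \end{aligned} \]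
   Context: $[\zeta]=\frac{\zeta-\zeta^{-1}}{q-q^{-1}}$. $U_q(\mathfrak{gl}(1|1))$ is the associative superalgebra generated by odd $E,F$ and even invertible commuting $W^{\pm1},K^{\pm1}$ with relations $KEK^{-1}=q^2E$, $KFK^{-1}=q^{-2}F$, $W$ central, $EF+FE=\frac{W-W^{-1}}{q-q^{-1}}$, $E^2=F^2=0$. It is a Hopf superalgebra with comultiplication $\Delta(W)=W\otimes W$, $\Delta(K)=K\otimes K$, $\Delta(E)=E\otimes W^{-1}+1\otimes E$, $\Delta(F)=F\otimes 1+W\otimes F$; tensor products of modules are formed via $\Delta$ with the sign rule $(a\otimes b)(v\otimes w)=(-1)^{|b||v|}(av\otimes bw)$ for homogeneous elements. For $\zeta,\kappa\in\mathbb{C}^\times$, $V(\zeta,\kappa)$ is the module with basis $x$ (even), $y$ (odd) and action $Ex=0$, $Fx=y$, $Wx=\zeta x$, $Kx=\kappa x$, $Fy=0$, $Ey=[\zeta]x$, $Wy=\zeta y$, $Ky=q^{-2}\kappa y$; similarly $V(\zeta',\kappa')$ has basis $x',y'$. A module homomorphism is a linear map commuting with the action of all generators. *)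

theory Defs
  imports "HOL-Analysis.Analysis"
begin

definition qbr :: "complex \<Rightarrow> complex \<Rightarrow> complex" where
  "qbr q z = (z - inverse z) / (q - inverse q)"

text \<open>Generators of U_q(gl(1|1)) (W^{-1}, K^{-1} are determined by W, K).\<close>
datatype gen = GE | GF | GW | GK

text \<open>The module V(zeta,kappa): basis indexed by bool, False = x (even), True = y (odd).
  A matrix M :: complex^bool^bool has entry M $ i $ j = coefficient of basis i in M(basis j).\<close>
definition actV :: "complex \<Rightarrow> complex \<Rightarrow> complex \<Rightarrow> gen \<Rightarrow> complex^bool^bool" where
  "actV q z k g = (case g of
     GE \<Rightarrow> (\<chi> i j. if i = False \<and> j = True then qbr q z else 0)
   | GF \<Rightarrow> (\<chi> i j. if i = True \<and> j = False then 1 else 0)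
   | GW \<Rightarrow> (\<chi> i j. if i = j then z else 0)
   | GK \<Rightarrow> (\<chi> i j. if i = j then (if i then inverse (q^2) * k else k) else 0))"

definition WinvV :: "complex \<Rightarrow> complex^bool^bool" where
  "WinvV z = (\<chi> i j. if i = j then inverse z else 0)"

text \<open>Super tensor product of operators: (A \<otimes> B)(e_k \<otimes> e_l) = (-1)^{|B||e_k|} A e_k \<otimes> B e_l,
  where pB is the parity of B (True = odd) and the parity of basis vector e_k is k.\<close>
definition tensM :: "bool \<Rightarrow> complex^bool^bool \<Rightarrow> complex^bool^bool \<Rightarrow> complex^(bool\<times>bool)^(bool\<times>bool)" where
  "tensM pB A B = (\<chi> r s. (if pB \<and> fst s then -1 else 1) * (A $ fst r $ fst s) * (B $ snd r $ snd s))"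

text \<open>Action on V(z,k) \<otimes> V(z',k') via the coproduct
  Delta(E) = E \<otimes> W^{-1} + 1 \<otimes> E, Delta(F) = F \<otimes> 1 + W \<otimes> F, Delta(W) = W \<otimes> W, Delta(K) = K \<otimes> K.\<close>
definition actT :: "complex \<Rightarrow> complex \<Rightarrow> complex \<Rightarrow> complex \<Rightarrow> complex \<Rightarrow> gen \<Rightarrow> complex^(bool\<times>bool)^(bool\<times>bool)" where
  "actT q z k z' k' g = (case g of
     GE \<Rightarrow> tensM False (actV q z k GE) (WinvV z') + tensM True (mat 1) (actV q z' k' GE)
   | GF \<Rightarrow> tensM False (actV q z k GF) (mat 1) + tensM True (actV q z k GW) (actV q z' k' GF)
   | GW \<Rightarrow> tensM False (actV q z k GW) (actV q z' k' GW)
   | GK \<Rightarrow> tensM False (actV q z k GK) (actV q z' k' GK))"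

definition is_hom :: "(gen \<Rightarrow> complex^'a^'a) \<Rightarrow> (gen \<Rightarrow> complex^'b^'b) \<Rightarrow> complex^'a^'b \<Rightarrow> bool" where
  "is_hom \<rho>1 \<rho>2 \<phi> \<longleftrightarrow> (\<forall>g. \<phi> ** \<rho>1 g = \<rho>2 g ** \<phi>)"

definition is_iso :: "(gen \<Rightarrow> complex^'a^'a) \<Rightarrow> (gen \<Rightarrow> complex^'a^'a) \<Rightarrow> complex^'a^'a \<Rightarrow> bool" where
  "is_iso \<rho>1 \<rho>2 \<phi> \<longleftrightarrow> is_hom \<rho>1 \<rho>2 \<phi> \<and> invertible \<phi>"

text \<open>Matrix of the map of form (*) from V(z,k) \<otimes> V(z',k') to V(z',k') \<otimes> V(z,k).
  Source index (i,j) = e_i \<otimes> e'_j; target index (j,i) = e'_j \<otimes> e_i.\<close>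
definition formMat :: "complex \<Rightarrow> complex \<Rightarrow> complex \<Rightarrow> complex \<Rightarrow> complex \<Rightarrow> complex \<Rightarrow> complex^(bool\<times>bool)^(bool\<times>bool)" where
  "formMat a1 a2 b1 b2 c1 c2 = (\<chi> r s.
     if s = (False, False) then (if r = (False, False) then a2 else 0)
     else if s = (False, True) then (if r = (False, True) then c2 else if r = (True, False) then b2 else 0)
     else if s = (True, False) then (if r = (False, True) then b1 else if r = (True, False) then c1 else 0)
     else (if r = (True, True) then a1 else 0))"

end

theory Submission
  imports Defs
begin

text \<open>K acts diagonally on both tensor products, by \<open>\<kappa>\<kappa>' q\<^sup>-\<^sup>2\<^sup>d\<close> on a basis
  vector with d odd factors. Since \<open>q\<^sup>2 \<noteq> 1\<close> and \<open>q\<^sup>4 \<noteq> 1\<close> these weights separate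
  d = 0, 1, 2, so every homomorphism (invertible or not) preserves d, which is the shape (*).
  On maps of that shape W and K act compatibly for free, and compatibility with E and with F
  amounts to the first and the last four equations respectively.\<close>

lemma UNIV_bool_times_bool:
  "(UNIV :: (bool \<times> bool) set) = {(False, False), (False, True), (True, False), (True, True)}"
  by auto

lemma all_gen_iff: "(\<forall>g. P g) \<longleftrightarrow> P GE \<and> P GF \<and> P GW \<and> P GK"
  by (metis gen.exhaust)

definition diag_mat :: "('n \<Rightarrow> 'a::zero) \<Rightarrow> 'a ^ 'n ^ 'n" where
  "diag_mat d = (\<chi> i j. if i = j then d i else 0)"

lemma matrix_mul_diag_mat_right:
  fixes A :: "'a::semiring_1 ^ 'n ^ 'm"
  shows "(A ** diag_mat d) $ i $ j = A $ i $ j * d j"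
  by (simp add: matrix_matrix_mult_def diag_mat_def if_distrib[of "(*) _"] cong: if_cong)

lemma matrix_mul_diag_mat_left:
  fixes A :: "'a::semiring_1 ^ 'n ^ 'm"
  shows "(diag_mat d ** A) $ i $ j = d i * A $ i $ j"
  by (simp add: matrix_matrix_mult_def diag_mat_def if_distrib[of "\<lambda>x. x * _"] cong: if_cong)

lemma intertwiner_diag_mat_eq_0:
  fixes \<phi> :: "'a::idom ^ 'n ^ 'm"
  assumes "\<phi> ** diag_mat d1 = diag_mat d2 ** \<phi>" and "d2 i \<noteq> d1 j"
  shows "\<phi> $ i $ j = 0"
proof -
  have "\<phi> $ i $ j * d1 j = d2 i * \<phi> $ i $ j"
    using assms(1) by (metis matrix_mul_diag_mat_left matrix_mul_diag_mat_right)
  then show ?thesis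
    using assms(2) by (metis mult.commute mult_cancel_left)
qed

definition odd_degree :: "bool \<times> bool \<Rightarrow> nat" where
  "odd_degree r = of_bool (fst r) + of_bool (snd r)"

lemma actT_GK:
  "actT q z k z' k' GK = diag_mat (\<lambda>r. k * k' * inverse (q ^ 2) ^ odd_degree r)"
  by (simp add: vec_eq_iff actT_def actV_def tensM_def diag_mat_def odd_degree_def)

lemma power_inj_upto_2:
  fixes w :: "'a::idom"
  assumes "w \<noteq> 0" "w \<noteq> 1" "w ^ 2 \<noteq> 1" "m \<le> 2" "n \<le> 2" "w ^ m = w ^ n"
  shows "m = n"
  using assms by (auto simp: le_Suc_eq numeral_2_eq_2)

lemma K_intertwiner_eq_formMat:
  fixes q z k z' k' :: complex
  assumes "q \<noteq> 0" "q ^ 4 \<noteq> 1" "k \<noteq> 0" "k' \<noteq> 0"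
    and "\<phi> ** actT q z k z' k' GK = actT q z' k' z k GK ** \<phi>"
  shows "\<phi> = formMat (\<phi> $ (True, True) $ (True, True)) (\<phi> $ (False, False) $ (False, False))
    (\<phi> $ (False, True) $ (True, False)) (\<phi> $ (True, False) $ (False, True))
    (\<phi> $ (True, False) $ (True, False)) (\<phi> $ (False, True) $ (False, True))"
proof -
  define w where "w = inverse (q ^ 2)"
  have "q ^ 2 \<noteq> 1"
    using assms(2) by (metis power_mult one_power2 numeral_Bit0 mult_2)
  moreover have "w ^ 2 = inverse (q ^ 4)"
    unfolding w_def by (simp add: power_inverse)
  ultimately have w: "w \<noteq> 0" "w \<noteq> 1" "w ^ 2 \<noteq> 1"
    using assms(1,2) unfolding w_def by simp_all
  have vanish: "\<phi> $ r $ s = 0" if "odd_degree r \<noteq> odd_degree s" for r s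
  proof (rule intertwiner_diag_mat_eq_0)
    show "\<phi> ** diag_mat (\<lambda>r. k * k' * w ^ odd_degree r)
        = diag_mat (\<lambda>r. k * k' * w ^ odd_degree r) ** \<phi>"
      using assms(5) by (simp add: actT_GK w_def mult.commute)
    have "odd_degree r \<le> 2" "odd_degree s \<le> 2"
      by (simp_all add: odd_degree_def)
    then have "w ^ odd_degree r \<noteq> w ^ odd_degree s"
      using power_inj_upto_2[OF w] that by blast
    then show "k * k' * w ^ odd_degree r \<noteq> k * k' * w ^ odd_degree s"
      using assms(3,4) by simp
  qed
  show ?thesis
    by (simp add: vec_eq_iff all_bool_eq formMat_def odd_degree_def vanish)
qed

lemma formMat_intertwines_GW:
  "formMat a1 a2 b1 b2 c1 c2 ** actT q z k z' k' GW = actT q z' k' z k GW ** formMat a1 a2 b1 b2 c1 c2"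
  by (simp add: vec_eq_iff all_bool_eq matrix_matrix_mult_def UNIV_bool_times_bool
      actT_def actV_def tensM_def formMat_def)

lemma formMat_intertwines_GK:
  "formMat a1 a2 b1 b2 c1 c2 ** actT q z k z' k' GK = actT q z' k' z k GK ** formMat a1 a2 b1 b2 c1 c2"
  by (simp add: vec_eq_iff all_bool_eq matrix_matrix_mult_def UNIV_bool_times_bool
      actT_def actV_def tensM_def formMat_def)

lemma formMat_intertwines_GE_iff:
  "formMat a1 a2 b1 b2 c1 c2 ** actT q z k z' k' GE = actT q z' k' z k GE ** formMat a1 a2 b1 b2 c1 c2
   \<longleftrightarrow> qbr q z * c2 + qbr q z' * inverse z * b2 = qbr q z' * a2
     \<and> qbr q z * b1 + inverse z * qbr q z' * c1 = qbr q z * inverse z' * a2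
     \<and> qbr q z' * inverse z * a1 = inverse z' * qbr q z * c2 - qbr q z' * b1
     \<and> - qbr q z * a1 = inverse z' * qbr q z * b2 - qbr q z' * c1"
  by (simp add: vec_eq_iff all_bool_eq matrix_matrix_mult_def UNIV_bool_times_bool
      actT_def actV_def tensM_def formMat_def WinvV_def mat_def) (auto simp: algebra_simps)

lemma formMat_intertwines_GF_iff:
  "formMat a1 a2 b1 b2 c1 c2 ** actT q z k z' k' GF = actT q z' k' z k GF ** formMat a1 a2 b1 b2 c1 c2
   \<longleftrightarrow> a2 = c1 + z * b2 \<and> z' * a2 = b1 + z * c2 \<and> c2 - z' * b2 = a1 \<and> b1 - c1 * z' = - a1 * z"
  by (simp add: vec_eq_iff all_bool_eq matrix_matrix_mult_def UNIV_bool_times_bool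
      actT_def actV_def tensM_def formMat_def mat_def) (auto simp: algebra_simps)

lemma formMat_is_hom_iff:
  "is_hom (actT q z k z' k') (actT q z' k' z k) (formMat a1 a2 b1 b2 c1 c2) \<longleftrightarrow>
     qbr q z * c2 + qbr q z' * inverse z * b2 = qbr q z' * a2
   \<and> qbr q z * b1 + inverse z * qbr q z' * c1 = qbr q z * inverse z' * a2
   \<and> qbr q z' * inverse z * a1 = inverse z' * qbr q z * c2 - qbr q z' * b1
   \<and> - qbr q z * a1 = inverse z' * qbr q z * b2 - qbr q z' * c1
   \<and> a2 = c1 + z * b2 \<and> z' * a2 = b1 + z * c2 \<and> c2 - z' * b2 = a1 \<and> b1 - c1 * z' = - a1 * z"
  unfolding is_hom_def all_gen_iff
  by (simp only: formMat_intertwines_GE_iff formMat_intertwines_GF_iff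
      formMat_intertwines_GW formMat_intertwines_GK simp_thms conj_assoc)

theorem proposition4p2:
  fixes q z k z' k' :: complex
  assumes "q \<noteq> 0" "q ^ 4 \<noteq> 1"
    and "z \<noteq> 0" "k \<noteq> 0" "z' \<noteq> 0" "k' \<noteq> 0"
    and "z \<noteq> 1" "z \<noteq> -1" "k ^ 4 \<noteq> 1"
    and "z' \<noteq> 1" "z' \<noteq> -1" "k' ^ 4 \<noteq> 1"
  shows "(\<forall>\<phi>. is_iso (actT q z k z' k') (actT q z' k' z k) \<phi> \<longrightarrow>
            (\<exists>a1 a2 b1 b2 c1 c2. \<phi> = formMat a1 a2 b1 b2 c1 c2))
       \<and> (\<forall>a1 a2 b1 b2 c1 c2.
            is_hom (actT q z k z' k') (actT q z' k' z k) (formMat a1 a2 b1 b2 c1 c2) \<longleftrightarrow>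
              (qbr q z * c2 + qbr q z' * inverse z * b2 = qbr q z' * a2
             \<and> qbr q z * b1 + inverse z * qbr q z' * c1 = qbr q z * inverse z' * a2
             \<and> qbr q z' * inverse z * a1 = inverse z' * qbr q z * c2 - qbr q z' * b1
             \<and> - qbr q z * a1 = inverse z' * qbr q z * b2 - qbr q z' * c1
             \<and> a2 = c1 + z * b2
             \<and> z' * a2 = b1 + z * c2
             \<and> c2 - z' * b2 = a1
             \<and> b1 - c1 * z' = - a1 * z))"
proof (intro conjI allI impI)
  fix \<phi>
  assume "is_iso (actT q z k z' k') (actT q z' k' z k) \<phi>"
  then have "\<phi> ** actT q z k z' k' GK = actT q z' k' z k GK ** \<phi>"
    unfolding is_iso_def is_hom_def by blast
  from K_intertwiner_eq_formMat[OF assms(1,2,4,6) this]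
  show "\<exists>a1 a2 b1 b2 c1 c2. \<phi> = formMat a1 a2 b1 b2 c1 c2"
    by blast
qed (rule formMat_is_hom_iff)

end
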